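(* Let $G=(V,E)$ be a connected, locally finite, undirected graph, fix $o\in V$ and $\beta>0$. The divisible sandpile $s$ with $s(x)=1$ for $x\ne o$ and $s(o)=1+\beta$ stabilizes on $G$ if and only if simple random walk on $G$ is transient.
   Context: $\Delta u(x)=\sum_{y\sim x}(u(y)-u(x))$. A divisible sandpile $s:V\to\mathbb{R}$ stabilizes if there exists $f:V\to[0,\infty)$ with $s+\Delta f\le 1$ pointwise. *)

theory Defs
  imports Complex_Main
begin

definition graph :: "'a set \<Rightarrow> ('a \<Rightarrow> 'a \<Rightarrow> bool) \<Rightarrow> bool" where
  "graph V E \<longleftrightarrow> (\<forall>x y. E x y \<longrightarrow> x \<in> V \<and> y \<in> V \<and> E y x \<and> x \<noteq> y)"

definition locally_finite :: "'a set \<Rightarrow> ('a \<Rightarrow> 'a \<Rightarrow> bool) \<Rightarrow> bool" where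
  "locally_finite V E \<longleftrightarrow> (\<forall>x\<in>V. finite {y. E x y})"

definition connected_graph :: "'a set \<Rightarrow> ('a \<Rightarrow> 'a \<Rightarrow> bool) \<Rightarrow> bool" where
  "connected_graph V E \<longleftrightarrow> (\<forall>x\<in>V. \<forall>y\<in>V. (x, y) \<in> {(a, b). E a b}\<^sup>*)"

definition laplacian :: "('a \<Rightarrow> 'a \<Rightarrow> bool) \<Rightarrow> ('a \<Rightarrow> real) \<Rightarrow> 'a \<Rightarrow> real" where
  "laplacian E u x = (\<Sum>y\<in>{y. E x y}. u y - u x)"

definition stabilizes :: "'a set \<Rightarrow> ('a \<Rightarrow> 'a \<Rightarrow> bool) \<Rightarrow> ('a \<Rightarrow> real) \<Rightarrow> bool" where
  "stabilizes V E s \<longleftrightarrow>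
     (\<exists>f :: 'a \<Rightarrow> real. (\<forall>x\<in>V. 0 \<le> f x) \<and> (\<forall>x\<in>V. s x + laplacian E f x \<le> 1))"

fun srw_prob :: "('a \<Rightarrow> 'a \<Rightarrow> bool) \<Rightarrow> nat \<Rightarrow> 'a \<Rightarrow> 'a \<Rightarrow> real" where
  "srw_prob E 0 x y = (if x = y then 1 else 0)"
| "srw_prob E (Suc n) x y =
     (if {z. E x z} = {} then srw_prob E n x y
      else (\<Sum>z\<in>{z. E x z}. srw_prob E n z y) / real (card {z. E x z}))"

definition srw_transient :: "('a \<Rightarrow> 'a \<Rightarrow> bool) \<Rightarrow> 'a \<Rightarrow> bool" where
  "srw_transient E v0 \<longleftrightarrow> summable (\<lambda>n. srw_prob E n v0 v0)"

end

theory Submission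
  imports Defs
begin

text \<open>
  Write \<open>G(x, o) = \<Sum>\<^sub>n p\<^sub>n(x, o)\<close> for the Green function of simple random walk and
  \<open>d(x)\<close> for the degree. One step of the walk shows that the partial sums
  \<open>G\<^sub>n(x, o) = \<Sum>\<^sub>k\<^sub><\<^sub>n p\<^sub>k(x, o)\<close> satisfy \<open>\<Delta>G\<^sub>n(\<cdot>, o)(x) = d(x) (p\<^sub>n(x, o) - p\<^sub>0(x, o))\<close>.
  A stabilizing odometer \<open>f \<ge> 0\<close> satisfies \<open>\<Delta>f \<le> -\<beta> \<delta>\<^sub>o\<close>, and by induction on \<open>n\<close>
  it dominates \<open>\<beta> G\<^sub>n(\<cdot>, o) / d(o)\<close>, so \<open>G(o, o) < \<infinity>\<close>. Conversely, if \<open>G(o, o) < \<infinity>\<close>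
  then by connectivity \<open>G(x, o) < \<infinity>\<close> for every \<open>x\<close>, and letting \<open>n \<rightarrow> \<infinity>\<close> gives
  \<open>\<Delta>G(\<cdot>, o) = -d(o) \<delta>\<^sub>o\<close>, so \<open>f = \<beta> G(\<cdot>, o) / d(o)\<close> is a stabilizing odometer.
\<close>

definition green :: "('a \<Rightarrow> 'a \<Rightarrow> bool) \<Rightarrow> 'a \<Rightarrow> 'a \<Rightarrow> real" where
  "green E x v = (\<Sum>n. srw_prob E n x v)"

lemma srw_prob_nonneg: "0 \<le> srw_prob E n x v"
  by (induction n arbitrary: x) (auto intro!: sum_nonneg divide_nonneg_nonneg)

lemma srw_prob_isolated:
  assumes "{y. E x y} = {}"
  shows "srw_prob E n x v = srw_prob E 0 x v"
  using assms by (induction n) simp_all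

text \<open>No finiteness is needed: sums and \<open>card\<close> over an infinite neighbourhood are both \<open>0\<close>.\<close>
lemma sum_neighbours_srw_prob:
  "(\<Sum>y | E x y. srw_prob E n y v) = real (card {y. E x y}) * srw_prob E (Suc n) x v"
proof (cases "finite {y. E x y} \<and> {y. E x y} \<noteq> {}")
  case True
  then have "card {y. E x y} > 0"
    by (simp add: card_gt_0_iff)
  with True show ?thesis
    by simp
qed auto

declare srw_prob.simps(2) [simp del]

lemma srw_prob_le_neighbour:
  assumes "E y x" and "finite {z. E y z}"
  shows "srw_prob E n x v \<le> real (card {z. E y z}) * srw_prob E (Suc n) y v"
proof -
  have "srw_prob E n x v \<le> (\<Sum>z | E y z. srw_prob E n z v)"
    using assms by (intro member_le_sum) (simp_all add: srw_prob_nonneg)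
  then show ?thesis
    by (simp only: sum_neighbours_srw_prob)
qed

lemma laplacian_eq: "laplacian E u x = (\<Sum>y | E x y. u y) - real (card {y. E x y}) * u x"
  by (simp add: laplacian_def sum_subtractf)

lemma laplacian_scale: "laplacian E (\<lambda>y. c * u y) x = c * laplacian E u x"
  by (simp add: laplacian_def sum_distrib_left algebra_simps)

lemma sum_neighbours_partial_green:
  "(\<Sum>y | E x y. \<Sum>k<n. srw_prob E k y v)
     = real (card {y. E x y}) * (\<Sum>k<n. srw_prob E (Suc k) x v)"
proof -
  have "(\<Sum>y | E x y. \<Sum>k<n. srw_prob E k y v) = (\<Sum>k<n. \<Sum>y | E x y. srw_prob E k y v)"
    by (rule sum.swap)
  then show ?thesis
    by (simp add: sum_neighbours_srw_prob sum_distrib_left)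
qed

lemma laplacian_partial_green:
  "laplacian E (\<lambda>y. \<Sum>k<n. srw_prob E k y v) x
     = real (card {y. E x y}) * (srw_prob E n x v - srw_prob E 0 x v)"
proof -
  have "laplacian E (\<lambda>y. \<Sum>k<n. srw_prob E k y v) x
      = real (card {y. E x y}) * (\<Sum>k<n. srw_prob E (Suc k) x v - srw_prob E k x v)"
    by (simp add: laplacian_eq sum_neighbours_partial_green sum_subtractf algebra_simps)
  then show ?thesis
    by (simp only: sum_lessThan_telescope[of "\<lambda>k. srw_prob E k x v"])
qed

lemma laplacian_green:
  assumes "summable (\<lambda>n. srw_prob E n x v)"
    and "\<And>y. E x y \<Longrightarrow> summable (\<lambda>n. srw_prob E n y v)"
  shows "laplacian E (\<lambda>y. green E y v) x = - (if x = v then real (card {y. E x y}) else 0)"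
proof -
  let ?L = "\<lambda>n. laplacian E (\<lambda>y. \<Sum>k<n. srw_prob E k y v) x"
  have "?L \<longlonglongrightarrow> laplacian E (\<lambda>y. green E y v) x"
    unfolding laplacian_def green_def
    using assms by (intro tendsto_intros summable_LIMSEQ) auto
  moreover have "?L \<longlonglongrightarrow> real (card {y. E x y}) * (0 - srw_prob E 0 x v)"
    unfolding laplacian_partial_green
    using assms(1) by (intro tendsto_intros summable_LIMSEQ_zero)
  ultimately show ?thesis
    by (auto dest: LIMSEQ_unique)
qed

text \<open>One step of the walk: \<open>d(x) G\<^sub>n\<^sub>+\<^sub>1(x) = d(x) \<delta>\<^sub>v(x) + \<Sum>\<^sub>y\<^sub>~\<^sub>x G\<^sub>n(y)\<close>.\<close>
lemma partial_green_Suc_le_superharmonic: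
  assumes "finite {y. E x y}" and "{y. E x y} \<noteq> {}"
    and IH: "\<And>y. E x y \<Longrightarrow> \<beta> * (\<Sum>k<n. srw_prob E k y v) \<le> real (card {y. E v y}) * f y"
    and super: "laplacian E f x + (if x = v then \<beta> else 0) \<le> 0"
  shows "\<beta> * (\<Sum>k<Suc n. srw_prob E k x v) \<le> real (card {y. E v y}) * f x"
proof -
  let ?dv = "real (card {y. E v y})" and ?d = "real (card {y. E x y})"
  let ?\<delta> = "if x = v then \<beta> else 0"
  have "?d > 0"
    using assms(1,2) by (simp add: card_gt_0_iff)
  have p0: "?d * (\<beta> * srw_prob E 0 x v) = ?dv * ?\<delta>"
    by (cases "x = v") simp_all
  have "\<beta> * (\<Sum>y | E x y. \<Sum>k<n. srw_prob E k y v) \<le> ?dv * (\<Sum>y | E x y. f y)"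
    unfolding sum_distrib_left[of _ "\<lambda>y. \<Sum>k<n. srw_prob E k y v"] sum_distrib_left[of ?dv]
    by (intro sum_mono IH) simp
  moreover have "?dv * (\<Sum>y | E x y. f y) \<le> ?dv * (?d * f x - ?\<delta>)"
    using super by (intro mult_left_mono) (simp_all add: laplacian_eq)
  moreover have "?d * (\<beta> * (\<Sum>k<Suc n. srw_prob E k x v))
      = ?d * (\<beta> * srw_prob E 0 x v) + \<beta> * (\<Sum>y | E x y. \<Sum>k<n. srw_prob E k y v)"
    unfolding sum.lessThan_Suc_shift sum_neighbours_partial_green by (simp add: algebra_simps)
  ultimately have "?d * (\<beta> * (\<Sum>k<Suc n. srw_prob E k x v)) \<le> ?d * (?dv * f x)"
    unfolding p0 by (simp add: algebra_simps)
  then show ?thesis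
    using \<open>?d > 0\<close> by simp
qed

lemma partial_green_le_superharmonic:
  assumes "graph V E" and "locally_finite V E"
    and nonneg: "\<And>y. y \<in> V \<Longrightarrow> 0 \<le> f y"
    and super: "\<And>y. y \<in> V \<Longrightarrow> laplacian E f y + (if y = v then \<beta> else 0) \<le> 0"
    and "x \<in> V"
  shows "\<beta> * (\<Sum>k<n. srw_prob E k x v) \<le> real (card {y. E v y}) * f x"
  using \<open>x \<in> V\<close>
proof (induction n arbitrary: x)
  case 0
  then show ?case
    using nonneg by simp
next
  case (Suc n x)
  show ?case
  proof (cases "{y. E x y} = {}")
    case True
    then have "(if x = v then \<beta> else 0) \<le> 0"
      using super[OF Suc.prems] by (simp add: laplacian_def)
    then have "\<beta> * (\<Sum>k<Suc n. srw_prob E k x v) \<le> 0"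
      using srw_prob_isolated[of E x, OF True] by (auto simp: mult_nonpos_nonneg)
    moreover have "0 \<le> real (card {y. E v y}) * f x"
      using nonneg[OF Suc.prems] by simp
    ultimately show ?thesis
      by linarith
  next
    case False
    have "E x y \<Longrightarrow> y \<in> V" for y
      using \<open>graph V E\<close> unfolding graph_def by blast
    with False Suc show ?thesis
      using \<open>locally_finite V E\<close> super
      by (intro partial_green_Suc_le_superharmonic) (auto simp: locally_finite_def)
  qed
qed

lemma transient_if_superharmonic:
  assumes "graph V E" and "locally_finite V E" and "v \<in> V" and "\<beta> > 0"
    and "\<And>y. y \<in> V \<Longrightarrow> 0 \<le> f y"
    and "\<And>y. y \<in> V \<Longrightarrow> laplacian E f y + (if y = v then \<beta> else 0) \<le> 0"
  shows "srw_transient E v"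
  unfolding srw_transient_def
proof (rule summableI_nonneg_bounded)
  fix n
  show "(\<Sum>k<n. srw_prob E k v v) \<le> real (card {y. E v y}) * f v / \<beta>"
    using partial_green_le_superharmonic[OF assms(1,2,5,6,3), of n] \<open>\<beta> > 0\<close>
    by (simp add: field_simps)
qed (rule srw_prob_nonneg)

lemma srw_prob_le_reachable:
  assumes "graph V E" and "locally_finite V E" and "(u, x) \<in> {(a, b). E a b}\<^sup>*"
  shows "\<exists>C k. \<forall>n. srw_prob E n x v \<le> C * srw_prob E (n + k) u v"
  using assms(3)
proof (induction rule: rtrancl_induct)
  case base
  show ?case
    by (rule exI[of _ 1], rule exI[of _ 0]) simp
next
  case (step y x)
  then obtain C k where Ck: "\<And>n. srw_prob E n y v \<le> C * srw_prob E (n + k) u v"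
    by blast
  have "E y x"
    using step by simp
  then have "finite {z. E y z}"
    using assms(1,2) unfolding graph_def locally_finite_def by blast
  have "srw_prob E n x v \<le> real (card {z. E y z}) * C * srw_prob E (n + Suc k) u v" for n
  proof -
    have "srw_prob E n x v \<le> real (card {z. E y z}) * srw_prob E (Suc n) y v"
      using \<open>E y x\<close> \<open>finite {z. E y z}\<close> by (rule srw_prob_le_neighbour)
    also have "\<dots> \<le> real (card {z. E y z}) * (C * srw_prob E (Suc n + k) u v)"
      by (intro mult_left_mono Ck) simp
    finally show ?thesis
      by (simp add: mult.assoc)
  qed
  then show ?case
    by blast
qed

lemma summable_srw_prob_reachable:
  assumes "graph V E" and "locally_finite V E" and "(u, x) \<in> {(a, b). E a b}\<^sup>*"
    and "summable (\<lambda>n. srw_prob E n u v)"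
  shows "summable (\<lambda>n. srw_prob E n x v)"
proof -
  obtain C k where Ck: "\<And>n. srw_prob E n x v \<le> C * srw_prob E (n + k) u v"
    using srw_prob_le_reachable[OF assms(1-3)] by blast
  have "summable (\<lambda>n. C * srw_prob E (n + k) u v)"
    using assms(4) summable_iff_shift[of "\<lambda>n. srw_prob E n u v" k] by (intro summable_mult) simp
  then show ?thesis
    by (rule summable_comparison_test') (simp add: Ck srw_prob_nonneg)
qed

lemma summable_srw_prob_if_transient:
  assumes "graph V E" and "connected_graph V E" and "locally_finite V E"
    and "v \<in> V" and "x \<in> V" and "srw_transient E v"
  shows "summable (\<lambda>n. srw_prob E n x v)"
proof (rule summable_srw_prob_reachable[OF assms(1,3)])
  show "(v, x) \<in> {(a, b). E a b}\<^sup>*"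
    using assms(2,4,5) unfolding connected_graph_def by blast
qed (use assms(6) in \<open>simp add: srw_transient_def\<close>)

lemma neighbours_nonempty_if_transient:
  assumes "srw_transient E v"
  shows "{y. E v y} \<noteq> {}"
proof
  assume "{y. E v y} = {}"
  then have "(\<lambda>n. srw_prob E n v v) = (\<lambda>_. 1)"
    using srw_prob_isolated[of E v] by simp
  with assms show False
    by (simp add: srw_transient_def summable_const_iff)
qed

lemma stabilizes_if_transient:
  assumes "graph V E" and "connected_graph V E" and "locally_finite V E"
    and "v \<in> V" and "\<beta> \<ge> 0" and "srw_transient E v"
  shows "stabilizes V E (\<lambda>x. if x = v then 1 + \<beta> else 1)"
proof -
  let ?dv = "real (card {y. E v y})"
  have summable: "summable (\<lambda>n. srw_prob E n x v)" if "x \<in> V" for x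
    using summable_srw_prob_if_transient[OF assms(1-4) that assms(6)] .
  have "?dv > 0"
    using neighbours_nonempty_if_transient[OF assms(6)] assms(3,4)
    by (simp add: locally_finite_def card_gt_0_iff)
  define f where "f x = \<beta> / ?dv * green E x v" for x
  show ?thesis
    unfolding stabilizes_def
  proof (intro exI[of _ f] conjI ballI)
    fix x
    assume "x \<in> V"
    moreover have "E x y \<Longrightarrow> y \<in> V" for y
      using \<open>graph V E\<close> unfolding graph_def by blast
    ultimately have "laplacian E (\<lambda>y. green E y v) x = - (if x = v then real (card {y. E x y}) else 0)"
      using summable by (intro laplacian_green) auto
    then show "(if x = v then 1 + \<beta> else 1) + laplacian E f x \<le> 1"
      using \<open>?dv > 0\<close> unfolding f_def laplacian_scale by simp
    show "0 \<le> f x"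
      unfolding f_def green_def using \<open>x \<in> V\<close> summable \<open>\<beta> \<ge> 0\<close>
      by (simp add: suminf_nonneg srw_prob_nonneg)
  qed
qed

theorem lemma2p12:
  fixes V :: "'a set" and E :: "'a \<Rightarrow> 'a \<Rightarrow> bool" and v0 :: 'a and \<beta> :: real
  assumes "graph V E" and "connected_graph V E" and "locally_finite V E"
    and "v0 \<in> V" and "\<beta> > 0"
  shows "stabilizes V E (\<lambda>x. if x = v0 then 1 + \<beta> else 1) \<longleftrightarrow> srw_transient E v0"
proof
  assume "stabilizes V E (\<lambda>x. if x = v0 then 1 + \<beta> else 1)"
  then obtain f where "\<And>y. y \<in> V \<Longrightarrow> 0 \<le> f y"
    and "\<And>y. y \<in> V \<Longrightarrow> laplacian E f y + (if y = v0 then \<beta> else 0) \<le> 0"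
    unfolding stabilizes_def by (fastforce split: if_splits)
  with assms show "srw_transient E v0"
    by (intro transient_if_superharmonic[of V E v0 \<beta> f])
next
  assume "srw_transient E v0"
  with assms show "stabilizes V E (\<lambda>x. if x = v0 then 1 + \<beta> else 1)"
    by (intro stabilizes_if_transient) auto
qed

end
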